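(* Let $P\subset\mathbb{R}^3$ be a minimal Fano polytope which is an octahedron. Then, up to the action of $GL(3,\mathbb{Z})$, $P$ is the convex hull of either $\{\pm(1,0,0),\pm(0,1,0),\pm(0,0,1)\}$ or $\{\pm(1,0,0),\pm(0,1,0),\pm(1,1,2)\}$.
   Context: A Fano polytope is a convex polytope $P\subset\mathbb{R}^3$ with vertices in $\mathbb{Z}^3$ such that the only lattice point of $P$ that is not a vertex is the origin, which lies strictly in the interior of $P$. A Fano polytope with vertex set $\{x_1,\ldots,x_k\}$ is minimal if for every $j$ the convex hull of $\{x_1,\ldots,x_k\}\setminus\{x_j\}$ is not a Fano polytope. *)

theory Defs
  imports "HOL-Analysis.Analysis"
begin

definition lattice_point :: "real^3 \<Rightarrow> bool" where
  "lattice_point x \<longleftrightarrow> (\<forall>i. x $ i \<in> \<int>)"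

definition vertices :: "(real^3) set \<Rightarrow> (real^3) set" where
  "vertices P = {v. v extreme_point_of P}"

definition fano_polytope :: "(real^3) set \<Rightarrow> bool" where
  "fano_polytope P \<longleftrightarrow> polytope P \<and> (\<forall>v \<in> vertices P. lattice_point v)
     \<and> 0 \<in> interior P
     \<and> {x \<in> P. lattice_point x} = vertices P \<union> {0}"

definition minimal_fano :: "(real^3) set \<Rightarrow> bool" where
  "minimal_fano P \<longleftrightarrow> fano_polytope P \<and>
     (\<forall>v \<in> vertices P. \<not> fano_polytope (convex hull (vertices P - {v})))"

definition octahedron :: "(real^3) set \<Rightarrow> bool" where
  "octahedron P \<longleftrightarrow> polytope P \<and>
     (\<exists>a1 a2 b1 b2 c1 c2. distinct [a1, a2, b1, b2, c1, c2] \<and>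
        vertices P = {a1, a2, b1, b2, c1, c2} \<and>
        {F. F facet_of P} =
          {convex hull {x, y, z} | x y z. x \<in> {a1, a2} \<and> y \<in> {b1, b2} \<and> z \<in> {c1, c2}})"

definition unimodular :: "real^3^3 \<Rightarrow> bool" where
  "unimodular A \<longleftrightarrow> (\<forall>i j. A $ i $ j \<in> \<int>) \<and> \<bar>det A\<bar> = 1"

end

theory Submission
  imports Defs
begin

text \<open>
  By minimality, every vertex \<open>v\<close> of \<open>P\<close> is separated from the other vertices by a linear
  functional: otherwise the origin would stay in the interior after removing \<open>v\<close>, and the
  convex hull of the remaining vertices would still be a Fano polytope. Let the
  vertices of the octahedron form the opposite pairs \<open>a\<^sub>1, a\<^sub>2\<close>, \<open>b\<^sub>1, b\<^sub>2\<close>, \<open>c\<^sub>1, c\<^sub>2\<close>. The ray from \<open>0\<close>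
  through \<open>-a\<^sub>1\<close> leaves \<open>P\<close> through a facet \<open>conv {a\<^sub>2, y, z}\<close>; writing \<open>-t a\<^sub>1\<close> as a convex
  combination of \<open>a\<^sub>2, y, z\<close>, the separating functionals of the other vertices force the weights
  of \<open>y\<close> and \<open>z\<close> to vanish, so \<open>a\<^sub>2 = -t a\<^sub>1\<close>, and \<open>t = 1\<close> because no lattice point lies strictly
  between \<open>0\<close> and a vertex. Hence \<open>P = conv {\<plusminus>a, \<plusminus>b, \<plusminus>c}\<close> for a real basis \<open>a, b, c\<close>.

  Since \<open>0\<close> and the vertices are the only lattice points of this cross-polytope, the
  coordinates of a lattice point with respect to \<open>a, b, c\<close> are either all integral or all in
  \<open>1/2 + \<int>\<close> (otherwise an integral combination of it, possibly doubled, and of \<open>a, b, c\<close>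
  would be a further lattice point whose coordinates have absolute values summing to at most
  \<open>1\<close>). In the first case \<open>a, b, c\<close> is a lattice basis; in the second, \<open>a, b, (c - a - b) / 2\<close>
  is, and \<open>c\<close> has coordinates \<open>(1, 1, 2)\<close>.
\<close>

section \<open>Lattice points and unimodular matrices\<close>

lemma lattice_point_add: "lattice_point x \<Longrightarrow> lattice_point y \<Longrightarrow> lattice_point (x + y)"
  by (simp add: lattice_point_def)

lemma lattice_point_diff: "lattice_point x \<Longrightarrow> lattice_point y \<Longrightarrow> lattice_point (x - y)"
  by (simp add: lattice_point_def)

lemma lattice_point_minus_iff [simp]: "lattice_point (- x) \<longleftrightarrow> lattice_point x"
  by (metis (no_types) Ints_minus lattice_point_def minus_minus vector_uminus_component)

lemma lattice_point_scaleR: "t \<in> \<int> \<Longrightarrow> lattice_point x \<Longrightarrow> lattice_point (t *\<^sub>R x)"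
  by (simp add: lattice_point_def)

lemma lattice_point_axis: "lattice_point (axis j 1)"
  by (simp add: lattice_point_def axis_def)

lemma lattice_point_vector: "a \<in> \<int> \<Longrightarrow> b \<in> \<int> \<Longrightarrow> c \<in> \<int> \<Longrightarrow> lattice_point (vector [a, b, c])"
  by (simp add: lattice_point_def forall_3)

lemma vector_matrix_mult_vector_3:
  "c v* (vector [u, v, w] :: real^3^3) = c$1 *\<^sub>R u + c$2 *\<^sub>R v + c$3 *\<^sub>R w"
  by (simp add: vector_matrix_mult_def vec_eq_iff sum_3 algebra_simps)

lemma transpose_vector_integral:
  assumes "lattice_point u" "lattice_point v" "lattice_point w"
  shows "transpose (vector [u, v, w] :: real^3^3) $ i $ j \<in> \<int>"
  using assms exhaust_3[of j] by (auto simp: transpose_def lattice_point_def)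

lemma det_integral:
  fixes A :: "real^'n^'n"
  assumes "\<And>i j. A $ i $ j \<in> \<int>"
  shows "det A \<in> \<int>"
  unfolding det_def by (intro Ints_sum Ints_mult Ints_prod assms) auto

lemma unimodular_if_lattice_surjective:
  fixes M :: "real^3^3"
  assumes integral: "\<And>i j. M $ i $ j \<in> \<int>"
    and surj: "\<And>x. lattice_point x \<Longrightarrow> \<exists>c. lattice_point c \<and> x = M *v c"
  shows "unimodular M"
proof -
  obtain c where c: "\<And>j. lattice_point (c j) \<and> axis j 1 = M *v c j"
    using surj[OF lattice_point_axis] by metis
  define B :: "real^3^3" where "B = (\<chi> i j. c j $ i)"
  have "M ** B = mat 1"
    using c by (simp add: B_def matrix_matrix_mult_def matrix_vector_mult_def mat_def vec_eq_iff axis_def)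
  then have det_prod: "det M * det B = 1"
    by (metis det_I det_mul)
  have "det B \<in> \<int>"
    using c by (intro det_integral) (simp add: B_def lattice_point_def)
  then obtain m n where m: "det M = of_int m" and n: "det B = of_int n"
    using det_integral[OF integral] by (metis Ints_cases)
  then have "m * n = 1"
    using det_prod by (metis of_int_eq_1_iff of_int_mult)
  then show ?thesis
    using integral m zmult_eq_1_iff unfolding unimodular_def by force
qed

section \<open>Lattice cross-polytopes without further lattice points\<close>

lemma round_nearest:
  fixes x :: real
  shows "\<bar>x - of_int (round x)\<bar> \<le> \<bar>x - of_int m\<bar>"
proof (cases "\<bar>x - of_int m\<bar> < 1/2")
  case True
  then show ?thesis by (simp add: round_unique')
next
  case False
  then show ?thesis using of_int_round_abs_le[of x] by (simp add: abs_minus_commute)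
qed

lemma half_integral_if_double_integral:
  fixes x :: real
  assumes "2 * x \<in> \<int>" "x \<notin> \<int>"
  shows "x - 1/2 \<in> \<int>"
proof -
  obtain n where n: "2 * x = of_int n" using assms(1) Ints_cases by metis
  have "odd n"
  proof
    assume "even n"
    then have "x = of_int (n div 2)" using n by (auto elim!: evenE)
    then show False using assms(2) by simp
  qed
  then have "x - 1/2 = of_int (n div 2)" using n by (auto elim!: oddE simp: field_simps)
  then show ?thesis by simp
qed

lemma half_integral_add:
  fixes a b :: real
  assumes "a - 1/2 \<in> \<int>" "b - 1/2 \<in> \<int>"
  shows "a + b \<in> \<int>"
proof -
  have "(a - 1/2) + (b - 1/2) + 1 \<in> \<int>" using assms by (intro Ints_add) auto
  then show ?thesis by simp
qed

lemma integral_or_half_integral: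
  fixes a b c :: real
  assumes cross: "\<And>(k::int) (n1::int) (n2::int) (n3::int). \<bar>k * a - n1\<bar> + \<bar>k * b - n2\<bar> + \<bar>k * c - n3\<bar> \<le> 1 \<Longrightarrow>
     (k * a - n1, k * b - n2, k * c - n3)
       \<in> {(0,0,0), (1,0,0), (-1,0,0), (0,1,0), (0,-1,0), (0,0,1), (0,0,-1)}"
  shows "(a \<in> \<int> \<and> b \<in> \<int> \<and> c \<in> \<int>) \<or> (a - 1/2 \<in> \<int> \<and> b - 1/2 \<in> \<int> \<and> c - 1/2 \<in> \<int>)"
proof -
  define \<delta> where "\<delta> x = \<bar>x - of_int (round x)\<bar>" for x :: real
  have \<delta>_le: "\<delta> x \<le> 1/2" for x
    using of_int_round_abs_le[of x] by (simp add: \<delta>_def abs_minus_commute)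
  have \<delta>_pos: "x \<notin> \<int>" if "\<delta> x > 0" for x
    using that by (auto simp: \<delta>_def elim!: Ints_cases)
  have vanish: "k * a = n1 \<and> k * b = n2 \<and> k * c = n3"
    if "\<bar>k * a - n1\<bar> \<le> 1/2" "\<bar>k * b - n2\<bar> \<le> 1/2" "\<bar>k * c - n3\<bar> \<le> 1/2"
       "\<bar>k * a - n1\<bar> + \<bar>k * b - n2\<bar> + \<bar>k * c - n3\<bar> \<le> 1" for k n1 n2 n3 :: int
    using cross[OF that(4)] that(1-3) by auto
  show ?thesis
  proof (cases "\<delta> a + \<delta> b + \<delta> c \<le> 1")
    case True
    then have "a = round a \<and> b = round b \<and> c = round c"
      using vanish[of 1 "round a" "round b" "round c"] \<delta>_le unfolding \<delta>_def by simp
    then show ?thesis by (metis Ints_of_int)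
  next
    case False
    have \<delta>_double: "\<delta> (2 * x) \<le> 1 - 2 * \<delta> x" for x
    proof -
      define s :: int where "s = (if x \<ge> of_int (round x) then 1 else -1)"
      have "\<delta> (2 * x) \<le> \<bar>2 * x - of_int (2 * round x + s)\<bar>"
        unfolding \<delta>_def by (rule round_nearest)
      also have "\<dots> = 1 - 2 * \<delta> x"
        using \<delta>_le[of x] by (auto simp: \<delta>_def s_def)
      finally show ?thesis .
    qed
    have "2 * a = round (2 * a) \<and> 2 * b = round (2 * b) \<and> 2 * c = round (2 * c)"
      using vanish[of 2 "round (2 * a)" "round (2 * b)" "round (2 * c)"] False
        \<delta>_le[of "2 * a"] \<delta>_le[of "2 * b"] \<delta>_le[of "2 * c"] \<delta>_double[of a] \<delta>_double[of b] \<delta>_double[of c]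
      unfolding \<delta>_def by simp
    moreover have "\<delta> a > 0" "\<delta> b > 0" "\<delta> c > 0"
      using False \<delta>_le[of a] \<delta>_le[of b] \<delta>_le[of c] by linarith+
    ultimately show ?thesis
      by (metis Ints_of_int \<delta>_pos half_integral_if_double_integral)
  qed
qed

lemma cross_polytope_memI:
  fixes u v w :: "'a::real_vector"
  assumes "\<bar>a\<bar> + \<bar>b\<bar> + \<bar>c\<bar> \<le> 1"
  shows "a *\<^sub>R u + b *\<^sub>R v + c *\<^sub>R w \<in> convex hull {u, -u, v, -v, w, -w}"
proof -
  let ?H = "convex hull {u, -u, v, -v, w, -w}"
  have signed: "sgn t *\<^sub>R p \<in> ?H" if "p \<in> ?H" "- p \<in> ?H" "0 \<in> ?H" for t :: real and p
    using that by (cases "t > 0"; cases "t < 0") auto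
  have "0 \<in> ?H"
    using convexD[of ?H u "-u" "1/2" "1/2"] by (simp add: hull_inc)
  then have pts: "[0, sgn a *\<^sub>R u, sgn b *\<^sub>R v, sgn c *\<^sub>R w] ! i \<in> ?H" if "i < 4" for i
    using that signed by (auto simp: hull_inc less_Suc_eq numeral_eq_Suc)
  have "(\<Sum>i<4. [1 - (\<bar>a\<bar> + \<bar>b\<bar> + \<bar>c\<bar>), \<bar>a\<bar>, \<bar>b\<bar>, \<bar>c\<bar>] ! i *\<^sub>R
          [0, sgn a *\<^sub>R u, sgn b *\<^sub>R v, sgn c *\<^sub>R w] ! i) \<in> ?H"
    by (rule convex_sum) (use assms pts in \<open>auto simp: numeral_eq_Suc lessThan_Suc less_Suc_eq\<close>)
  then show ?thesis
    by (simp add: numeral_eq_Suc lessThan_Suc abs_mult_sgn add.commute add.left_commute)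
qed

lemma in_span_3_coordinates:
  fixes x y z :: "'a::real_vector"
  assumes "p \<in> span {x, y, z}"
  obtains r s q where "p = r *\<^sub>R x + s *\<^sub>R y + q *\<^sub>R z"
  using assms by (auto simp: span_insert span_singleton algebra_simps)

lemma bij_coordinates_3:
  fixes u v w :: "real^3"
  assumes "span {u, v, w} = UNIV"
  shows "bij (\<lambda>c::real^3. c$1 *\<^sub>R u + c$2 *\<^sub>R v + c$3 *\<^sub>R w)"
proof -
  let ?f = "\<lambda>c::real^3. c$1 *\<^sub>R u + c$2 *\<^sub>R v + c$3 *\<^sub>R w"
  have "linear ?f"
    by (intro linearI) (simp_all add: algebra_simps)
  moreover have "surj ?f"
  proof -
    have "x \<in> range ?f" for x
    proof -
      obtain r s q where "x = r *\<^sub>R u + s *\<^sub>R v + q *\<^sub>R w"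
        using in_span_3_coordinates assms by blast
      then have "x = ?f (vector [r, s, q])"
        by simp
      then show ?thesis
        by blast
    qed
    then show ?thesis
      by blast
  qed
  ultimately show ?thesis
    by (simp add: bij_def linear_surjective_imp_injective)
qed

lemma unimodular_if_lattice_basis:
  assumes "lattice_point u" "lattice_point v" "lattice_point w"
    and "\<And>x. lattice_point x \<Longrightarrow> \<exists>c. lattice_point c \<and> x = c$1 *\<^sub>R u + c$2 *\<^sub>R v + c$3 *\<^sub>R w"
  shows "unimodular (transpose (vector [u, v, w]))"
  using assms(4) by (intro unimodular_if_lattice_surjective transpose_vector_integral[OF assms(1-3)])
    (simp add: vector_matrix_mult_vector_3)

lemma lattice_coordinates_integral_or_half_integral:
  fixes u v w c :: "real^3"
  assumes lattice: "lattice_point u" "lattice_point v" "lattice_point w"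
    and span: "span {u, v, w} = UNIV"
    and empty: "\<And>x. lattice_point x \<Longrightarrow> x \<in> convex hull {u, -u, v, -v, w, -w} \<Longrightarrow>
                  x \<in> {0, u, -u, v, -v, w, -w}"
    and c_lattice: "lattice_point (c$1 *\<^sub>R u + c$2 *\<^sub>R v + c$3 *\<^sub>R w)"
  shows "(c$1 \<in> \<int> \<and> c$2 \<in> \<int> \<and> c$3 \<in> \<int>) \<or> (c$1 - 1/2 \<in> \<int> \<and> c$2 - 1/2 \<in> \<int> \<and> c$3 - 1/2 \<in> \<int>)"
proof (rule integral_or_half_integral)
  let ?f = "\<lambda>c::real^3. c$1 *\<^sub>R u + c$2 *\<^sub>R v + c$3 *\<^sub>R w"
  fix k n1 n2 n3 :: int
  define d where "d = of_int k *\<^sub>R c - vector [of_int n1, of_int n2, of_int n3]"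
  assume "\<bar>k * c$1 - n1\<bar> + \<bar>k * c$2 - n2\<bar> + \<bar>k * c$3 - n3\<bar> \<le> 1"
  then have "?f d \<in> convex hull {u, -u, v, -v, w, -w}"
    by (intro cross_polytope_memI) (simp add: d_def)
  moreover have "?f d = of_int k *\<^sub>R ?f c - (of_int n1 *\<^sub>R u + of_int n2 *\<^sub>R v + of_int n3 *\<^sub>R w)"
    by (simp add: d_def algebra_simps)
  then have "lattice_point (?f d)"
    using c_lattice lattice
    by (simp add: lattice_point_diff lattice_point_add lattice_point_scaleR)
  ultimately have "?f d \<in> {0, u, -u, v, -v, w, -w}"
    by (rule empty[rotated])
  also have "{0, u, -u, v, -v, w, -w} = ?f ` {0, vector [1,0,0], vector [-1,0,0], vector [0,1,0],
      vector [0,-1,0], vector [0,0,1], vector [0,0,-1]}"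
    by simp
  finally have image: "?f d \<in> ?f ` {0, vector [1,0,0], vector [-1,0,0], vector [0,1,0],
      vector [0,-1,0], vector [0,0,1], vector [0,0,-1]}" .
  have "inj ?f"
    using bij_coordinates_3[OF span] by (simp add: bij_def)
  then have "d \<in> {0, vector [1,0,0], vector [-1,0,0], vector [0,1,0],
      vector [0,-1,0], vector [0,0,1], vector [0,0,-1]}"
    using image by (rule inj_image_mem_iff[THEN iffD1])
  then show "(k * c$1 - n1, k * c$2 - n2, k * c$3 - n3)
     \<in> {(0,0,0), (1,0,0), (-1,0,0), (0,1,0), (0,-1,0), (0,0,1), (0,0,-1)}"
    by (auto simp: d_def vec_eq_iff forall_3)
qed

lemma unimodular_if_half_integral_lattice_point:
  fixes u v w c0 :: "real^3"
  assumes lattice: "lattice_point u" "lattice_point v" "lattice_point w"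
    and span: "span {u, v, w} = UNIV"
    and empty: "\<And>x. lattice_point x \<Longrightarrow> x \<in> convex hull {u, -u, v, -v, w, -w} \<Longrightarrow>
                  x \<in> {0, u, -u, v, -v, w, -w}"
    and c0: "lattice_point (c0$1 *\<^sub>R u + c0$2 *\<^sub>R v + c0$3 *\<^sub>R w)" "\<not> lattice_point c0"
  shows "unimodular (transpose (vector [u, v, (1/2) *\<^sub>R (w - u - v)]))"
proof -
  let ?f = "\<lambda>c::real^3. c$1 *\<^sub>R u + c$2 *\<^sub>R v + c$3 *\<^sub>R w"
  define y where "y = (1/2) *\<^sub>R (w - u - v)"
  have integral_or_half: "(c$1 \<in> \<int> \<and> c$2 \<in> \<int> \<and> c$3 \<in> \<int>) \<or>
      (c$1 - 1/2 \<in> \<int> \<and> c$2 - 1/2 \<in> \<int> \<and> c$3 - 1/2 \<in> \<int>)"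
    if "lattice_point (?f c)" for c
    by (rule lattice_coordinates_integral_or_half_integral[OF lattice span empty that])
  have half: "c0$1 - 1/2 \<in> \<int>" "c0$2 - 1/2 \<in> \<int>" "c0$3 - 1/2 \<in> \<int>"
    using integral_or_half[OF c0(1)] c0(2) by (auto simp: lattice_point_def forall_3)
  have "y = ?f c0 - ((c0$1 + 1/2) *\<^sub>R u + (c0$2 + 1/2) *\<^sub>R v + (c0$3 - 1/2) *\<^sub>R w)"
    by (simp add: y_def algebra_simps)
  moreover have "c0$1 + 1/2 \<in> \<int>" "c0$2 + 1/2 \<in> \<int>"
    using half_integral_add[OF half(1)] half_integral_add[OF half(2)] by auto
  then have "lattice_point ((c0$1 + 1/2) *\<^sub>R u + (c0$2 + 1/2) *\<^sub>R v + (c0$3 - 1/2) *\<^sub>R w)"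
    using half(3) lattice by (simp add: lattice_point_add lattice_point_scaleR)
  ultimately have "lattice_point y"
    using c0(1) by (simp add: lattice_point_diff)
  have "unimodular (transpose (vector [u, v, y]))"
  proof (intro unimodular_if_lattice_basis lattice(1,2) \<open>lattice_point y\<close>)
    fix x
    assume "lattice_point x"
    moreover obtain c where c: "x = ?f c"
      using bij_coordinates_3[OF span] unfolding bij_def surj_def by blast
    ultimately have "c$1 + c$3 \<in> \<int> \<and> c$2 + c$3 \<in> \<int> \<and> 2 * c$3 \<in> \<int>"
      using integral_or_half[of c] half_integral_add[of "c$3" "c$3"] by (auto intro: Ints_add half_integral_add)
    then have "lattice_point (vector [c$1 + c$3, c$2 + c$3, 2 * c$3])"
      by (simp add: lattice_point_vector)
    moreover have "x = (c$1 + c$3) *\<^sub>R u + (c$2 + c$3) *\<^sub>R v + (2 * c$3) *\<^sub>R y"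
      by (simp add: c y_def algebra_simps)
    ultimately show "\<exists>d. lattice_point d \<and> x = d$1 *\<^sub>R u + d$2 *\<^sub>R v + d$3 *\<^sub>R y"
      by (metis vector_3)
  qed
  then show ?thesis
    unfolding y_def .
qed

lemma empty_lattice_octahedron_normal_form:
  fixes u v w :: "real^3"
  assumes lattice: "lattice_point u" "lattice_point v" "lattice_point w"
    and span: "span {u, v, w} = UNIV"
    and empty: "\<And>x. lattice_point x \<Longrightarrow> x \<in> convex hull {u, -u, v, -v, w, -w} \<Longrightarrow>
                  x \<in> {0, u, -u, v, -v, w, -w}"
  shows "\<exists>A. unimodular A \<and>
    (convex hull {u, -u, v, -v, w, -w} = (\<lambda>x. A *v x) ` (convex hull {vector [1,0,0], vector [-1,0,0],
        vector [0,1,0], vector [0,-1,0], vector [0,0,1], vector [0,0,-1]})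
     \<or> convex hull {u, -u, v, -v, w, -w} = (\<lambda>x. A *v x) ` (convex hull {vector [1,0,0], vector [-1,0,0],
        vector [0,1,0], vector [0,-1,0], vector [1,1,2], vector [-1,-1,-2]}))"
proof -
  let ?f = "\<lambda>c::real^3. c$1 *\<^sub>R u + c$2 *\<^sub>R v + c$3 *\<^sub>R w"
  show ?thesis
  proof (cases "\<forall>c. lattice_point (?f c) \<longrightarrow> lattice_point c")
    case True
    define A :: "real^3^3" where "A = transpose (vector [u, v, w])"
    have "\<exists>c. lattice_point c \<and> x = ?f c" if "lattice_point x" for x
    proof -
      obtain c where "x = ?f c"
        using bij_coordinates_3[OF span] unfolding bij_def surj_def by blast
      then show ?thesis
        using True that by blast
    qed
    then have "unimodular A"
      unfolding A_def by (intro unimodular_if_lattice_basis lattice)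
    moreover have "(\<lambda>c. A *v c) ` {vector [1,0,0], vector [-1,0,0], vector [0,1,0],
        vector [0,-1,0], vector [0,0,1], vector [0,0,-1]} = {u, -u, v, -v, w, -w}"
      by (simp add: A_def vector_matrix_mult_vector_3)
    ultimately show ?thesis
      by (auto simp only: convex_hull_linear_image[OF matrix_vector_mul_linear])
  next
    case False
    then obtain c0 where c0: "lattice_point (?f c0)" "\<not> lattice_point c0"
      by blast
    define A :: "real^3^3" where "A = transpose (vector [u, v, (1/2) *\<^sub>R (w - u - v)])"
    have "unimodular A"
      unfolding A_def by (rule unimodular_if_half_integral_lattice_point[OF lattice span empty c0])
    moreover have "(\<lambda>d. A *v d) ` {vector [1,0,0], vector [-1,0,0], vector [0,1,0],
        vector [0,-1,0], vector [1,1,2], vector [-1,-1,-2]} = {u, -u, v, -v, w, -w}"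
      by (simp add: A_def vector_matrix_mult_vector_3 algebra_simps)
    ultimately show ?thesis
      by (auto simp only: convex_hull_linear_image[OF matrix_vector_mul_linear])
  qed
qed

section \<open>Convex geometry\<close>

lemma halfspace_containing_convex_if_not_interior:
  fixes S :: "'a::euclidean_space set"
  assumes "convex S" "0 \<notin> interior S"
  obtains a where "a \<noteq> 0" "\<And>y. y \<in> S \<Longrightarrow> 0 \<le> a \<bullet> y"
proof (cases "interior S = {}")
  case True
  then obtain a b where "a \<noteq> 0" "S \<subseteq> {x. a \<bullet> x = b}"
    using empty_interior_subset_hyperplane[OF assms(1)] by metis
  then show ?thesis
    using that[of "if b \<ge> 0 then a else - a"] by (fastforce split: if_splits)
next
  case False
  then have not_rel_interior: "0 \<notin> rel_interior S"
    using assms(2) rel_interior_nonempty_interior by metis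
  show ?thesis
  proof (cases "0 \<in> closure S")
    case True
    then show ?thesis
      using supporting_hyperplane_relative_frontier[OF assms(1) True not_rel_interior]
        closure_subset that by (metis inner_zero_right subsetD)
  next
    case False
    then show ?thesis
      using separating_hyperplane_set_0[OF assms(1)] closure_subset that by blast
  qed
qed

lemma separating_functional_if_not_interior:
  fixes V :: "'a::euclidean_space set"
  assumes "0 \<in> interior (convex hull V)" "0 \<notin> interior (convex hull (V - {v}))"
  obtains d where "d \<bullet> v < 0" "\<And>w. w \<in> V - {v} \<Longrightarrow> 0 \<le> d \<bullet> w"
proof -
  obtain d where d: "d \<noteq> 0" "\<And>y. y \<in> convex hull (V - {v}) \<Longrightarrow> 0 \<le> d \<bullet> y"
    using halfspace_containing_convex_if_not_interior[OF convex_convex_hull assms(2)] by blast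
  have "d \<bullet> v < 0"
  proof (rule ccontr)
    assume "\<not> d \<bullet> v < 0"
    have "V \<subseteq> {x. 0 \<le> d \<bullet> x}"
    proof
      fix x
      assume "x \<in> V"
      then show "x \<in> {x. 0 \<le> d \<bullet> x}"
        using \<open>\<not> d \<bullet> v < 0\<close> d(2)[OF hull_inc, of x] by (cases "x = v") auto
    qed
    then have "convex hull V \<subseteq> {x. 0 \<le> d \<bullet> x}"
      by (simp add: convex_halfspace_ge hull_minimal)
    then have "0 \<in> interior {x. 0 \<le> d \<bullet> x}"
      using assms(1) interior_mono[of "convex hull V"] by auto
    then show False
      using d(1) by simp
  qed
  then show ?thesis
    using that d(2)[OF hull_inc] by blast
qed

lemma extreme_point_of_subset:
  "x extreme_point_of S \<Longrightarrow> T \<subseteq> S \<Longrightarrow> x \<in> T \<Longrightarrow> x extreme_point_of T"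
  unfolding extreme_point_of_def by blast

lemma extreme_point_in_convex_hull_subset:
  assumes "x extreme_point_of S" "convex S" "T \<subseteq> S" "x \<in> convex hull T"
  shows "x \<in> T"
proof -
  have "convex hull T \<subseteq> S"
    using assms(2,3) by (simp add: hull_minimal)
  then have "x extreme_point_of convex hull T"
    by (rule extreme_point_of_subset[OF assms(1) _ assms(4)])
  then show ?thesis
    by (rule extreme_point_of_convex_hull)
qed

lemma vertices_convex_hull_subset:
  assumes "convex P" "T \<subseteq> vertices P"
  shows "vertices (convex hull T) = T"
proof
  show "vertices (convex hull T) \<subseteq> T"
    unfolding vertices_def using extreme_point_of_convex_hull by blast
  show "T \<subseteq> vertices (convex hull T)"
  proof
    fix x
    assume "x \<in> T"
    have "T \<subseteq> P"
      using assms(2) by (auto simp: vertices_def extreme_point_of_def)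
    then have "convex hull T \<subseteq> P"
      using assms(1) by (simp add: hull_minimal)
    moreover have "x extreme_point_of P"
      using assms(2) \<open>x \<in> T\<close> by (auto simp: vertices_def)
    ultimately have "x extreme_point_of convex hull T"
      using extreme_point_of_subset hull_inc[OF \<open>x \<in> T\<close>] by blast
    then show "x \<in> vertices (convex hull T)"
      by (simp add: vertices_def)
  qed
qed

lemma facet_in_unit_hyperplane:
  fixes P :: "'a::euclidean_space set"
  assumes "polytope P" "0 \<in> interior P" "F facet_of P"
  obtains h where "\<And>x. x \<in> F \<Longrightarrow> h \<bullet> x = 1"
proof -
  obtain a b where a: "a \<noteq> 0" "P \<subseteq> {x. a \<bullet> x \<le> b}" "F = P \<inter> {x. a \<bullet> x = b}"
    using facet_of_polyhedron[OF polytope_imp_polyhedron[OF assms(1)] assms(3)] by metis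
  have "0 \<in> interior {x. a \<bullet> x \<le> b}"
    using assms(2) a(2) interior_mono by blast
  then have "0 < b"
    using a(1) by simp
  then show ?thesis
    using that[of "(1 / b) *\<^sub>R a"] a(3) by simp
qed

lemma span_eq_UNIV_if_in_unit_hyperplane:
  fixes S :: "'a::euclidean_space set"
  assumes "\<And>x. x \<in> S \<Longrightarrow> h \<bullet> x = 1" "aff_dim S = int DIM('a) - 1"
  shows "span S = UNIV"
proof -
  have "affine hull S \<subseteq> {x. h \<bullet> x = 1}"
    using assms(1) by (intro hull_minimal) (auto simp: affine_hyperplane)
  then have "0 \<notin> affine hull S"
    by auto
  then have "aff_dim (insert 0 S) = int DIM('a)"
    using assms(2) by (simp add: aff_dim_insert)
  moreover have "aff_dim (insert 0 S) = int (dim (insert 0 S))"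
    using aff_dim_eq_dim[of 0 "insert 0 S"] by (simp add: hull_inc)
  ultimately have "dim (insert 0 S) = DIM('a)"
    by simp
  then have "span (insert 0 S) = UNIV"
    by (simp only: dim_eq_full)
  then show ?thesis
    by simp
qed

lemma facet_hull_span:
  fixes P :: "'a::euclidean_space set"
  assumes "polytope P" "0 \<in> interior P" "convex hull S facet_of P"
  shows "span S = UNIV"
proof -
  obtain h where h: "\<And>x. x \<in> convex hull S \<Longrightarrow> h \<bullet> x = 1"
    using facet_in_unit_hyperplane[OF assms] by blast
  have "aff_dim P = int DIM('a)"
    using assms(2) aff_dim_nonempty_interior by blast
  then have "aff_dim S = int DIM('a) - 1"
    using assms(3) by (simp add: facet_of_def aff_dim_convex_hull)
  then show ?thesis
    using h hull_inc by (intro span_eq_UNIV_if_in_unit_hyperplane) fast+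
qed

lemma ray_meets_facet:
  fixes P :: "'a::euclidean_space set"
  assumes "polytope P" "0 \<in> interior P" "p \<noteq> 0"
  obtains t F where "0 < t" "F facet_of P" "t *\<^sub>R p \<in> F"
proof -
  have "0 \<in> rel_interior P"
    using assms(2) interior_subset_rel_interior by blast
  moreover have "p \<in> affine hull P"
    using affine_hull_nonempty_interior assms(2) by blast
  ultimately obtain t where "0 < t" "t *\<^sub>R p \<in> rel_frontier P"
    using ray_to_rel_frontier[OF polytope_imp_bounded[OF assms(1)], of 0 p] assms(3) by auto
  moreover have "rel_frontier P = \<Union> {F. F facet_of P}"
    using rel_boundary_of_polyhedron[OF polytope_imp_polyhedron[OF assms(1)]]
    by (simp add: rel_frontier_def polytope_imp_closed[OF assms(1)])
  ultimately show ?thesis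
    using that by blast
qed

section \<open>Fano polytopes\<close>

lemma fano_polytope_hull_vertices:
  assumes "fano_polytope P"
  shows "P = convex hull (vertices P)" "finite (vertices P)"
proof -
  have "polytope P"
    using assms by (simp add: fano_polytope_def)
  then show "P = convex hull (vertices P)"
    unfolding vertices_def by (simp add: Krein_Milman_Minkowski polytope_imp_compact polytope_imp_convex)
  show "finite (vertices P)"
    unfolding vertices_def
    by (rule finite_polyhedron_extreme_points[OF polytope_imp_polyhedron[OF \<open>polytope P\<close>]])
qed

lemma fano_polytope_remove_vertex:
  assumes fano: "fano_polytope P" and "v \<in> vertices P"
    and interior: "0 \<in> interior (convex hull (vertices P - {v}))"
  shows "fano_polytope (convex hull (vertices P - {v}))"
proof -
  define S where "S = convex hull (vertices P - {v})"
  have P: "P = convex hull (vertices P)" "finite (vertices P)"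
    using fano by (rule fano_polytope_hull_vertices)+
  have "convex P"
    using fano by (simp add: fano_polytope_def polytope_imp_convex)
  then have vertices_S: "vertices S = vertices P - {v}"
    unfolding S_def by (rule vertices_convex_hull_subset) blast
  have "v \<notin> S"
    using extreme_point_in_convex_hull_subset[OF _ \<open>convex P\<close>, of v "vertices P - {v}"] assms(2)
    unfolding S_def vertices_def extreme_point_of_def by blast
  have "S \<subseteq> P"
    unfolding S_def by (subst P(1)) (rule hull_mono, blast)
  have "0 \<in> S"
    using interior interior_subset unfolding S_def by blast
  have "fano_polytope S"
    unfolding fano_polytope_def
  proof (intro conjI)
    show "polytope S"
      unfolding S_def polytope_def using P(2) by blast
    show "\<forall>w\<in>vertices S. lattice_point w"
      using fano vertices_S by (simp add: fano_polytope_def)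
    show "0 \<in> interior S"
      using interior unfolding S_def .
    have "vertices S \<subseteq> S"
      unfolding vertices_def extreme_point_of_def by blast
    moreover have "{x \<in> P. lattice_point x} = vertices P \<union> {0}"
      using fano by (simp add: fano_polytope_def)
    ultimately show "{x \<in> S. lattice_point x} = vertices S \<union> {0}"
      using \<open>S \<subseteq> P\<close> \<open>v \<notin> S\<close> \<open>0 \<in> S\<close> vertices_S by blast
  qed
  then show ?thesis
    unfolding S_def .
qed

lemma minimal_fano_vertex_separable:
  assumes "minimal_fano P" "v \<in> vertices P"
  obtains d where "d \<bullet> v < 0" "\<And>w. w \<in> vertices P - {v} \<Longrightarrow> 0 \<le> d \<bullet> w"
proof -
  have fano: "fano_polytope P"
    using assms(1) by (simp add: minimal_fano_def)
  then have "0 \<in> interior (convex hull (vertices P))"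
    using fano_polytope_hull_vertices(1) by (simp add: fano_polytope_def)
  moreover have "0 \<notin> interior (convex hull (vertices P - {v}))"
    using fano_polytope_remove_vertex[OF fano assms(2)] assms unfolding minimal_fano_def by blast
  ultimately show ?thesis
    using separating_functional_if_not_interior that by blast
qed

lemma fano_vertex_opposite_not_shorter:
  assumes "fano_polytope P" "u \<in> vertices P" "- (s *\<^sub>R u) \<in> vertices P" "0 < s"
  shows "1 \<le> s"
proof (rule ccontr)
  assume "\<not> 1 \<le> s"
  have fano: "convex P" "0 \<in> interior P" "{x \<in> P. lattice_point x} = vertices P \<union> {0}"
    "\<forall>w\<in>vertices P. lattice_point w"
    using assms(1) by (simp_all add: fano_polytope_def polytope_imp_convex)
  have "u \<in> P" "0 \<in> P"
    using assms(2) fano(2) interior_subset unfolding vertices_def extreme_point_of_def by blast+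
  have "u \<noteq> 0"
    using assms(2) fano(2) extreme_point_not_in_interior unfolding vertices_def by blast
  have "s *\<^sub>R u \<in> P"
    using convexD[OF fano(1) \<open>0 \<in> P\<close> \<open>u \<in> P\<close>, of "1 - s" s] \<open>0 < s\<close> \<open>\<not> 1 \<le> s\<close> by simp
  moreover have "lattice_point (s *\<^sub>R u)"
    using fano(4) assms(3) lattice_point_minus_iff by blast
  ultimately have "s *\<^sub>R u \<in> vertices P \<union> {0}"
    using fano(3) by blast
  then have "s *\<^sub>R u \<in> vertices P"
    using \<open>u \<noteq> 0\<close> \<open>0 < s\<close> by auto
  moreover have "s *\<^sub>R u \<in> open_segment 0 u"
    using \<open>u \<noteq> 0\<close> \<open>0 < s\<close> \<open>\<not> 1 \<le> s\<close> by (auto simp: in_segment)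
  ultimately show False
    using \<open>0 \<in> P\<close> \<open>u \<in> P\<close> unfolding vertices_def extreme_point_of_def by blast
qed

lemma fano_vertex_opposite_eq:
  assumes "fano_polytope P" "u \<in> vertices P" "- (s *\<^sub>R u) \<in> vertices P" "0 < s"
  shows "s = 1"
proof -
  have "1 \<le> s"
    using assms by (rule fano_vertex_opposite_not_shorter)
  moreover have "1 \<le> 1 / s"
    using fano_vertex_opposite_not_shorter[OF assms(1,3), of "1 / s"] assms(2,4) by simp
  ultimately show ?thesis
    using assms(4) by (simp add: field_simps)
qed

section \<open>Minimal octahedral fans\<close>

lemma nonneg_summands_eq_0:
  fixes t w x y z :: real
  assumes "-(t * w) = x + y + z" "0 < t" "0 \<le> w" "0 \<le> x" "0 \<le> y" "0 \<le> z"
  shows "x = 0 \<and> y = 0 \<and> z = 0"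
proof -
  have "0 \<le> t * w"
    using assms(2,3) by simp
  then show ?thesis
    using assms(1,4-6) by linarith
qed

text \<open>The vertices of a minimal Fano octahedron, with opposite pairs \<open>a\<^sub>i\<close>, \<open>b\<^sub>i\<close>, \<open>c\<^sub>i\<close>;
  \<open>vertex_separable\<close> is the form in which minimality is used.\<close>

locale minimal_octahedral_fan =
  fixes a1 a2 b1 b2 c1 c2 :: "real^3"
  assumes distinct_vertices: "distinct [a1, a2, b1, b2, c1, c2]"
    and facet_hyperplane: "\<And>x y z. x \<in> {a1, a2} \<Longrightarrow> y \<in> {b1, b2} \<Longrightarrow> z \<in> {c1, c2} \<Longrightarrow>
      \<exists>h. h \<bullet> x = 1 \<and> h \<bullet> y = 1 \<and> h \<bullet> z = 1"
    and facet_span: "\<And>x y z. x \<in> {a1, a2} \<Longrightarrow> y \<in> {b1, b2} \<Longrightarrow> z \<in> {c1, c2} \<Longrightarrow>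
      span {x, y, z} = UNIV"
    and rays_covered: "\<And>p. p \<noteq> 0 \<Longrightarrow>
      \<exists>x\<in>{a1, a2}. \<exists>y\<in>{b1, b2}. \<exists>z\<in>{c1, c2}. \<exists>t>0. t *\<^sub>R p \<in> convex hull {x, y, z}"
    and vertex_separable: "\<And>v. v \<in> {a1, a2, b1, b2, c1, c2} \<Longrightarrow>
      \<exists>d. d \<bullet> v < 0 \<and> (\<forall>w\<in>{a1, a2, b1, b2, c1, c2} - {v}. 0 \<le> d \<bullet> w)"
begin

lemma swap_second_pair: "minimal_octahedral_fan a1 a2 b2 b1 c1 c2"
proof -
  have pair: "{b2, b1} = {b1, b2}" and vertices: "{a1, a2, b2, b1, c1, c2} = {a1, a2, b1, b2, c1, c2}"
    by auto
  show ?thesis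
  proof
    show "distinct [a1, a2, b2, b1, c1, c2]"
      using distinct_vertices by auto
  qed (unfold pair vertices; fact facet_hyperplane facet_span rays_covered vertex_separable)+
qed

lemma swap_third_pair: "minimal_octahedral_fan a1 a2 b1 b2 c2 c1"
proof -
  have pair: "{c2, c1} = {c1, c2}" and vertices: "{a1, a2, b1, b2, c2, c1} = {a1, a2, b1, b2, c1, c2}"
    by auto
  show ?thesis
  proof
    show "distinct [a1, a2, b1, b2, c2, c1]"
      using distinct_vertices by auto
  qed (unfold pair vertices; fact facet_hyperplane facet_span rays_covered vertex_separable)+
qed

lemma swap_last_pairs: "minimal_octahedral_fan a1 a2 c1 c2 b1 b2"
proof
  show "distinct [a1, a2, c1, c2, b1, b2]"
    using distinct_vertices by auto
  show "\<exists>h. h \<bullet> x = 1 \<and> h \<bullet> y = 1 \<and> h \<bullet> z = 1"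
    if "x \<in> {a1, a2}" "y \<in> {c1, c2}" "z \<in> {b1, b2}" for x y z
    using facet_hyperplane[OF that(1,3,2)] by blast
  show "span {x, y, z} = UNIV"
    if "x \<in> {a1, a2}" "y \<in> {c1, c2}" "z \<in> {b1, b2}" for x y z
    using facet_span[OF that(1,3,2)] by (simp add: insert_commute)
  show "\<exists>x\<in>{a1, a2}. \<exists>y\<in>{c1, c2}. \<exists>z\<in>{b1, b2}. \<exists>t>0. t *\<^sub>R p \<in> convex hull {x, y, z}"
    if p: "p \<noteq> 0" for p
  proof -
    obtain x y z t where "x \<in> {a1, a2}" "y \<in> {b1, b2}" "z \<in> {c1, c2}" "t > 0"
      and "t *\<^sub>R p \<in> convex hull {x, y, z}"
      using rays_covered[OF p] by blast
    moreover have "{x, y, z} = {x, z, y}"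
      by blast
    ultimately show ?thesis
      by metis
  qed
  have "{a1, a2, c1, c2, b1, b2} = {a1, a2, b1, b2, c1, c2}"
    by blast
  then show "\<exists>d. d \<bullet> v < 0 \<and> (\<forall>w\<in>{a1, a2, c1, c2, b1, b2} - {v}. 0 \<le> d \<bullet> w)"
    if "v \<in> {a1, a2, c1, c2, b1, b2}" for v
    using vertex_separable that by simp
qed

lemma rotate_pairs: "minimal_octahedral_fan b1 b2 c1 c2 a1 a2"
proof
  show "distinct [b1, b2, c1, c2, a1, a2]"
    using distinct_vertices by auto
  show "\<exists>h. h \<bullet> x = 1 \<and> h \<bullet> y = 1 \<and> h \<bullet> z = 1"
    if "x \<in> {b1, b2}" "y \<in> {c1, c2}" "z \<in> {a1, a2}" for x y z
    using facet_hyperplane[OF that(3,1,2)] by blast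
  show "span {x, y, z} = UNIV"
    if "x \<in> {b1, b2}" "y \<in> {c1, c2}" "z \<in> {a1, a2}" for x y z
    using facet_span[OF that(3,1,2)] by (simp add: insert_commute)
  show "\<exists>x\<in>{b1, b2}. \<exists>y\<in>{c1, c2}. \<exists>z\<in>{a1, a2}. \<exists>t>0. t *\<^sub>R p \<in> convex hull {x, y, z}"
    if p: "p \<noteq> 0" for p
  proof -
    obtain x y z t where "x \<in> {a1, a2}" "y \<in> {b1, b2}" "z \<in> {c1, c2}" "t > 0"
      and "t *\<^sub>R p \<in> convex hull {x, y, z}"
      using rays_covered[OF p] by blast
    moreover have "{x, y, z} = {y, z, x}"
      by blast
    ultimately show ?thesis
      by metis
  qed
  have "{b1, b2, c1, c2, a1, a2} = {a1, a2, b1, b2, c1, c2}"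
    by blast
  then show "\<exists>d. d \<bullet> v < 0 \<and> (\<forall>w\<in>{b1, b2, c1, c2, a1, a2} - {v}. 0 \<le> d \<bullet> w)"
    if "v \<in> {b1, b2, c1, c2, a1, a2}" for v
    using vertex_separable that by simp
qed

lemma antipode_coefficient_pos:
  assumes "0 < t" "0 \<le> \<alpha>" "0 \<le> \<beta>" "0 \<le> \<gamma>"
    and "-(t *\<^sub>R a1) = \<alpha> *\<^sub>R a2 + \<beta> *\<^sub>R b1 + \<gamma> *\<^sub>R c1"
  shows "0 < \<alpha>"
proof (rule ccontr)
  assume "\<not> 0 < \<alpha>"
  then have "\<alpha> = 0"
    using assms(2) by simp
  obtain h where "h \<bullet> a1 = 1" "h \<bullet> b1 = 1" "h \<bullet> c1 = 1"
    using facet_hyperplane[of a1 b1 c1] by auto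
  then have "- t = \<beta> + \<gamma>"
    using arg_cong[OF assms(5), of "\<lambda>p. h \<bullet> p"] \<open>\<alpha> = 0\<close> by (simp add: inner_add_right)
  then show False
    using assms(1,3,4) by linarith
qed

lemma antipode_not_on_edge:
  assumes "0 < t" "0 \<le> \<alpha>" "0 < \<beta>" "-(t *\<^sub>R a1) = \<alpha> *\<^sub>R a2 + \<beta> *\<^sub>R b1"
  shows False
proof -
  have "0 < \<alpha>"
    using antipode_coefficient_pos[of t \<alpha> \<beta> 0] assms by simp
  have vanish: "d \<bullet> a2 = 0 \<and> d \<bullet> b1 = 0" if "0 \<le> d \<bullet> a1" "0 \<le> d \<bullet> a2" "0 \<le> d \<bullet> b1" for d
  proof -
    have "-(t * (d \<bullet> a1)) = \<alpha> * (d \<bullet> a2) + \<beta> * (d \<bullet> b1) + 0"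
      using arg_cong[OF assms(4), of "\<lambda>p. d \<bullet> p"] by (simp add: inner_add_right)
    then have "\<alpha> * (d \<bullet> a2) = 0 \<and> \<beta> * (d \<bullet> b1) = 0 \<and> (0::real) = 0"
      using assms(1) that(1) by (rule nonneg_summands_eq_0) (use assms(2,3) that(2,3) in simp_all)
    then show ?thesis
      using assms(3) \<open>0 < \<alpha>\<close> by simp
  qed
  have "span {a2, b1, c1} = UNIV"
    using facet_span[of a2 b1 c1] by simp
  then obtain r s q where b2: "b2 = r *\<^sub>R a2 + s *\<^sub>R b1 + q *\<^sub>R c1"
    using in_span_3_coordinates by blast
  obtain r' s' q' where c2: "c2 = r' *\<^sub>R a2 + s' *\<^sub>R b1 + q' *\<^sub>R c1"
    using in_span_3_coordinates \<open>span {a2, b1, c1} = UNIV\<close> by blast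
  txt \<open>The functionals separating \<open>c1\<close>, \<open>c2\<close> and \<open>b2\<close> vanish on \<open>a2\<close> and \<open>b1\<close>, so their values at
    \<open>b2\<close> are \<open>q\<close> times their values at \<open>c1\<close>; the signs force \<open>q = 0\<close>, i.e. \<open>b2 \<in> span {a2, b1}\<close>.\<close>
  have along_c1: "d \<bullet> b2 = q * (d \<bullet> c1) \<and> d \<bullet> c2 = q' * (d \<bullet> c1)"
    if "0 \<le> d \<bullet> a1" "0 \<le> d \<bullet> a2" "0 \<le> d \<bullet> b1" for d
    using vanish[OF that] by (simp add: b2 c2 inner_add_right)
  obtain d1 where d1: "d1 \<bullet> c1 < 0" "0 \<le> d1 \<bullet> a1" "0 \<le> d1 \<bullet> a2" "0 \<le> d1 \<bullet> b1" "0 \<le> d1 \<bullet> b2"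
    using vertex_separable[of c1] distinct_vertices by auto
  obtain d2 where d2: "d2 \<bullet> c2 < 0" "0 \<le> d2 \<bullet> a1" "0 \<le> d2 \<bullet> a2" "0 \<le> d2 \<bullet> b1" "0 \<le> d2 \<bullet> b2"
    "0 \<le> d2 \<bullet> c1"
    using vertex_separable[of c2] distinct_vertices by auto
  obtain d3 where d3: "d3 \<bullet> b2 < 0" "0 \<le> d3 \<bullet> a1" "0 \<le> d3 \<bullet> a2" "0 \<le> d3 \<bullet> b1"
    using vertex_separable[of b2] distinct_vertices by auto
  have "q \<le> 0"
    using along_c1[OF d1(2-4)] d1(1,5) by (simp add: zero_le_mult_iff)
  moreover have "0 < d2 \<bullet> c1"
    using along_c1[OF d2(2-4)] d2(1,6) by (auto simp: mult_less_0_iff)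
  then have "0 \<le> q"
    using along_c1[OF d2(2-4)] d2(5) by (simp add: zero_le_mult_iff)
  ultimately have "q = 0"
    by simp
  then show False
    using along_c1[OF d3(2-4)] d3(1) by simp
qed

lemma antipode_coefficients:
  assumes "0 < t" "0 \<le> \<alpha>" "0 \<le> \<beta>" "0 \<le> \<gamma>"
    and rel: "-(t *\<^sub>R a1) = \<alpha> *\<^sub>R a2 + \<beta> *\<^sub>R b1 + \<gamma> *\<^sub>R c1"
  shows "\<beta> = 0 \<and> \<gamma> = 0"
proof (rule ccontr)
  assume "\<not> (\<beta> = 0 \<and> \<gamma> = 0)"
  then consider "0 < \<beta>" "0 < \<gamma>" | "0 < \<beta>" "\<gamma> = 0" | "\<beta> = 0" "0 < \<gamma>"
    using assms(3,4) by linarith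
  then show False
  proof cases
    case 1
    have "0 < \<alpha>"
      using antipode_coefficient_pos assms by blast
    obtain d where d: "d \<bullet> b2 < 0" "0 \<le> d \<bullet> a1" "0 \<le> d \<bullet> a2" "0 \<le> d \<bullet> b1" "0 \<le> d \<bullet> c1"
      using vertex_separable[of b2] distinct_vertices by auto
    have "-(t * (d \<bullet> a1)) = \<alpha> * (d \<bullet> a2) + \<beta> * (d \<bullet> b1) + \<gamma> * (d \<bullet> c1)"
      using arg_cong[OF rel, of "\<lambda>p. d \<bullet> p"] by (simp add: inner_add_right)
    then have "\<alpha> * (d \<bullet> a2) = 0 \<and> \<beta> * (d \<bullet> b1) = 0 \<and> \<gamma> * (d \<bullet> c1) = 0"
      using assms(1) d(2) by (rule nonneg_summands_eq_0) (use assms(2-4) d(3-5) in simp_all)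
    then have "d \<bullet> a2 = 0" "d \<bullet> b1 = 0" "d \<bullet> c1 = 0"
      using 1 \<open>0 < \<alpha>\<close> by simp_all
    moreover have "span {a2, b1, c1} = UNIV"
      using facet_span[of a2 b1 c1] by simp
    then obtain r s q where "b2 = r *\<^sub>R a2 + s *\<^sub>R b1 + q *\<^sub>R c1"
      using in_span_3_coordinates by blast
    ultimately show False
      using d(1) by (simp add: inner_add_right)
  next
    case 2
    then show False
      using antipode_not_on_edge[of t \<alpha> \<beta>] assms(1,2) rel by simp
  next
    case 3
    then show False
      using minimal_octahedral_fan.antipode_not_on_edge[OF swap_last_pairs, of t \<alpha> \<gamma>] assms(1,2) rel
      by simp
  qed
qed

lemma relabel_pairs:
  assumes "y \<in> {b1, b2}" "z \<in> {c1, c2}"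
  obtains y' z' where "minimal_octahedral_fan a1 a2 y y' z z'"
proof -
  consider "y = b1" "z = c1" | "y = b2" "z = c1" | "y = b1" "z = c2" | "y = b2" "z = c2"
    using assms by blast
  then show ?thesis
  proof cases
    case 1
    then show ?thesis
      using that[of b2 c2] minimal_octahedral_fan_axioms by simp
  next
    case 2
    then show ?thesis
      using that[of b1 c2] swap_second_pair by simp
  next
    case 3
    then show ?thesis
      using that[of b2 c1] swap_third_pair by simp
  next
    case 4
    then show ?thesis
      using that[of b1 c1] minimal_octahedral_fan.swap_third_pair[OF swap_second_pair] by simp
  qed
qed

lemma ray_opposite_first_vertex:
  assumes "0 < t" "x \<in> {a1, a2}" "y \<in> {b1, b2}" "z \<in> {c1, c2}"
    and "-(t *\<^sub>R a1) \<in> convex hull {x, y, z}"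
  shows "a2 = -(t *\<^sub>R a1)"
proof -
  obtain h where h: "h \<bullet> x = 1" "h \<bullet> y = 1" "h \<bullet> z = 1"
    using facet_hyperplane assms(2-4) by blast
  have "convex hull {x, y, z} \<subseteq> {p. h \<bullet> p = 1}"
    using h by (intro hull_minimal) (auto simp: convex_hyperplane)
  then have "x \<noteq> a1"
    using assms(1,5) h(1) by auto
  then have "x = a2"
    using assms(2) by blast
  then obtain \<alpha> \<beta> \<gamma> where coeffs: "0 \<le> \<alpha>" "0 \<le> \<beta>" "0 \<le> \<gamma>" "\<alpha> + \<beta> + \<gamma> = 1"
    and rel: "-(t *\<^sub>R a1) = \<alpha> *\<^sub>R a2 + \<beta> *\<^sub>R y + \<gamma> *\<^sub>R z"
    using assms(5) unfolding convex_hull_3 by blast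
  obtain y' z' where "minimal_octahedral_fan a1 a2 y y' z z'"
    using relabel_pairs assms(3,4) by blast
  then have "\<beta> = 0 \<and> \<gamma> = 0"
    using minimal_octahedral_fan.antipode_coefficients assms(1) coeffs(1-3) rel by blast
  then show ?thesis
    using rel coeffs(4) by simp
qed

lemma first_pair_opposite: "\<exists>t>0. a2 = -(t *\<^sub>R a1)"
proof -
  obtain h where "h \<bullet> a1 = 1"
    using facet_hyperplane[of a1 b1 c1] by auto
  then have "-a1 \<noteq> 0"
    by auto
  then obtain x y z t where xyz: "x \<in> {a1, a2}" "y \<in> {b1, b2}" "z \<in> {c1, c2}" and "0 < t"
    and "t *\<^sub>R (-a1) \<in> convex hull {x, y, z}"
    using rays_covered[of "-a1"] by blast
  then have "-(t *\<^sub>R a1) \<in> convex hull {x, y, z}"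
    by simp
  then have "a2 = -(t *\<^sub>R a1)"
    by (rule ray_opposite_first_vertex[OF \<open>0 < t\<close> xyz])
  then show ?thesis
    using \<open>0 < t\<close> by blast
qed

lemma pairs_opposite:
  "\<exists>t>0. a2 = -(t *\<^sub>R a1)" "\<exists>t>0. b2 = -(t *\<^sub>R b1)" "\<exists>t>0. c2 = -(t *\<^sub>R c1)"
proof -
  show "\<exists>t>0. a2 = -(t *\<^sub>R a1)"
    by (rule first_pair_opposite)
  show "\<exists>t>0. b2 = -(t *\<^sub>R b1)"
    by (rule minimal_octahedral_fan.first_pair_opposite[OF rotate_pairs])
  show "\<exists>t>0. c2 = -(t *\<^sub>R c1)"
    by (rule minimal_octahedral_fan.first_pair_opposite[OF minimal_octahedral_fan.rotate_pairs[OF rotate_pairs]])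
qed

end

lemma minimal_octahedral_fan_if_minimal_fano:
  assumes "minimal_fano P" and distinct: "distinct [a1, a2, b1, b2, c1, c2]"
    and vertices: "vertices P = {a1, a2, b1, b2, c1, c2}"
    and facets: "{F. F facet_of P} =
      {convex hull {x, y, z} | x y z. x \<in> {a1, a2} \<and> y \<in> {b1, b2} \<and> z \<in> {c1, c2}}"
  shows "minimal_octahedral_fan a1 a2 b1 b2 c1 c2"
proof
  have "fano_polytope P"
    using assms(1) by (simp add: minimal_fano_def)
  then have P: "polytope P" "0 \<in> interior P"
    by (simp_all add: fano_polytope_def)
  have facet: "convex hull {x, y, z} facet_of P"
    if "x \<in> {a1, a2}" "y \<in> {b1, b2}" "z \<in> {c1, c2}" for x y z
  proof -
    have "convex hull {x, y, z} \<in> {F. F facet_of P}"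
      unfolding facets using that by (intro CollectI exI[of _ x] exI[of _ y] exI[of _ z]) simp
    then show ?thesis
      by simp
  qed
  show "distinct [a1, a2, b1, b2, c1, c2]"
    by (fact distinct)
  show "\<exists>h. h \<bullet> x = 1 \<and> h \<bullet> y = 1 \<and> h \<bullet> z = 1"
    if xyz: "x \<in> {a1, a2}" "y \<in> {b1, b2}" "z \<in> {c1, c2}" for x y z
  proof -
    obtain h where "\<And>p. p \<in> convex hull {x, y, z} \<Longrightarrow> h \<bullet> p = 1"
      using facet_in_unit_hyperplane[OF P facet[OF xyz]] by blast
    moreover have "x \<in> convex hull {x, y, z}" "y \<in> convex hull {x, y, z}" "z \<in> convex hull {x, y, z}"
      by (simp_all add: hull_inc)
    ultimately show ?thesis
      by blast
  qed
  show "span {x, y, z} = UNIV"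
    if "x \<in> {a1, a2}" "y \<in> {b1, b2}" "z \<in> {c1, c2}" for x y z
    using facet_hull_span[OF P facet[OF that]] .
  show "\<exists>x\<in>{a1, a2}. \<exists>y\<in>{b1, b2}. \<exists>z\<in>{c1, c2}. \<exists>t>0. t *\<^sub>R p \<in> convex hull {x, y, z}"
    if "p \<noteq> 0" for p
  proof -
    obtain t F where "0 < t" "F facet_of P" "t *\<^sub>R p \<in> F"
      using ray_meets_facet[OF P \<open>p \<noteq> 0\<close>] by blast
    moreover have "F \<in> {F. F facet_of P}"
      using \<open>F facet_of P\<close> by simp
    then obtain x y z where
      "x \<in> {a1, a2}" "y \<in> {b1, b2}" "z \<in> {c1, c2}" "F = convex hull {x, y, z}"
      unfolding facets by blast
    ultimately show ?thesis
      by blast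
  qed
  show "\<exists>d. d \<bullet> v < 0 \<and> (\<forall>w\<in>{a1, a2, b1, b2, c1, c2} - {v}. 0 \<le> d \<bullet> w)"
    if "v \<in> {a1, a2, b1, b2, c1, c2}" for v
  proof -
    have "v \<in> vertices P"
      using that vertices by simp
    then obtain d where "d \<bullet> v < 0" "\<And>w. w \<in> vertices P - {v} \<Longrightarrow> 0 \<le> d \<bullet> w"
      using minimal_fano_vertex_separable[OF assms(1)] by blast
    then show ?thesis
      unfolding vertices by blast
  qed
qed

lemma minimal_fano_octahedron_vertices:
  assumes "minimal_fano P" "octahedron P"
  obtains a b c where "vertices P = {a, -a, b, -b, c, -c}" "span {a, b, c} = UNIV"
proof -
  obtain a1 a2 b1 b2 c1 c2 where distinct: "distinct [a1, a2, b1, b2, c1, c2]"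
    and vertices: "vertices P = {a1, a2, b1, b2, c1, c2}"
    and facets: "{F. F facet_of P} =
      {convex hull {x, y, z} | x y z. x \<in> {a1, a2} \<and> y \<in> {b1, b2} \<and> z \<in> {c1, c2}}"
    using assms(2) unfolding octahedron_def by (elim conjE exE) (rule that; assumption)
  interpret minimal_octahedral_fan a1 a2 b1 b2 c1 c2
    using minimal_octahedral_fan_if_minimal_fano[OF assms(1) distinct vertices facets] .
  have fano: "fano_polytope P"
    using assms(1) by (simp add: minimal_fano_def)
  have opposite: "v' = - v"
    if "v \<in> vertices P" "v' \<in> vertices P" and scaled: "\<exists>t>0. v' = -(t *\<^sub>R v)" for v v'
  proof -
    obtain t where "0 < t" "v' = -(t *\<^sub>R v)"
      using scaled by blast
    moreover have "t = 1"
      using fano_vertex_opposite_eq[OF fano \<open>v \<in> vertices P\<close>] \<open>v' \<in> vertices P\<close> calculation by simp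
    ultimately show ?thesis
      by simp
  qed
  have "a2 = - a1" "b2 = - b1" "c2 = - c1"
    using opposite[of a1 a2] opposite[of b1 b2] opposite[of c1 c2] pairs_opposite
    unfolding vertices by simp_all
  then have "vertices P = {a1, -a1, b1, -b1, c1, -c1}"
    using vertices by simp
  moreover have "span {a1, b1, c1} = UNIV"
    using facet_span[of a1 b1 c1] by simp
  ultimately show ?thesis
    by (rule that)
qed

theorem lemma4p3:
  fixes P :: "(real^3) set"
  assumes "minimal_fano P" and "octahedron P"
  shows "\<exists>A. unimodular A \<and>
    (P = (\<lambda>x. A *v x) ` (convex hull {vector [1,0,0], vector [-1,0,0], vector [0,1,0],
                                   vector [0,-1,0], vector [0,0,1], vector [0,0,-1]})
     \<or> P = (\<lambda>x. A *v x) ` (convex hull {vector [1,0,0], vector [-1,0,0], vector [0,1,0],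
                                   vector [0,-1,0], vector [1,1,2], vector [-1,-1,-2]}))"
proof -
  have fano: "fano_polytope P"
    using assms(1) by (simp add: minimal_fano_def)
  obtain a b c where vertices: "vertices P = {a, -a, b, -b, c, -c}" and span: "span {a, b, c} = UNIV"
    using minimal_fano_octahedron_vertices[OF assms] by blast
  have P_eq: "P = convex hull {a, -a, b, -b, c, -c}"
    using fano_polytope_hull_vertices(1)[OF fano] unfolding vertices .
  have lattice: "lattice_point a" "lattice_point b" "lattice_point c"
    using fano vertices by (simp_all add: fano_polytope_def)
  have lattice_points: "{x \<in> P. lattice_point x} = {0, a, -a, b, -b, c, -c}"
    using fano vertices by (simp add: fano_polytope_def)
  have empty: "x \<in> {0, a, -a, b, -b, c, -c}"
    if "lattice_point x" "x \<in> convex hull {a, -a, b, -b, c, -c}" for x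
  proof -
    have "x \<in> {x \<in> P. lattice_point x}"
      using that P_eq by simp
    then show ?thesis
      unfolding lattice_points .
  qed
  show ?thesis
    unfolding P_eq by (rule empty_lattice_octahedron_normal_form[OF lattice span empty])
qed

end
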